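(* Every modular lattice $S$ of finite length is isomorphic to the skeleton $S(M)$ of some sublattice $M$ of $S\times S$.
   Context: For a modular lattice $M$ of finite length, an interval $[a,b]$ is \emph{atomistic} if every element of it is a join of atoms of $[a,b]$ (elements covering $a$); the \emph{skeleton} $S(M)$ is the set of least elements of the maximal (under inclusion) atomistic intervals of $M$, ordered as in $M$ (it is a lattice). *)

theory Defs
  imports Main
begin

definition modular_lattice :: "'a::lattice itself \<Rightarrow> bool" where
  "modular_lattice _ \<longleftrightarrow>
     (\<forall>x y z :: 'a. x \<le> z \<longrightarrow> sup x (inf y z) = inf (sup x y) z)"

definition finite_length :: "'a::order itself \<Rightarrow> bool" where
  "finite_length _ \<longleftrightarrow>
     (\<exists>n::nat. \<forall>C :: 'a set. Complete_Partial_Order.chain (\<le>) C \<longrightarrow> finite C \<and> card C \<le> n)"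

definition prod_le :: "'a::order \<times> 'a \<Rightarrow> 'a \<times> 'a \<Rightarrow> bool" where
  "prod_le p q \<longleftrightarrow> fst p \<le> fst q \<and> snd p \<le> snd q"

definition sublattice_prod :: "('a::lattice \<times> 'a) set \<Rightarrow> bool" where
  "sublattice_prod M \<longleftrightarrow> M \<noteq> {} \<and>
     (\<forall>p\<in>M. \<forall>q\<in>M. (inf (fst p) (fst q), inf (snd p) (snd q)) \<in> M
                  \<and> (sup (fst p) (fst q), sup (snd p) (snd q)) \<in> M)"

definition interval_in :: "'b set \<Rightarrow> ('b \<Rightarrow> 'b \<Rightarrow> bool) \<Rightarrow> 'b \<Rightarrow> 'b \<Rightarrow> 'b set" where
  "interval_in L le a b = {x\<in>L. le a x \<and> le x b}"

definition covers_in :: "'b set \<Rightarrow> ('b \<Rightarrow> 'b \<Rightarrow> bool) \<Rightarrow> 'b \<Rightarrow> 'b \<Rightarrow> bool" where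
  "covers_in L le x y \<longleftrightarrow> x \<in> L \<and> y \<in> L \<and> le x y \<and> x \<noteq> y \<and>
     \<not> (\<exists>z\<in>L. le x z \<and> le z y \<and> z \<noteq> x \<and> z \<noteq> y)"

definition atoms_in :: "'b set \<Rightarrow> ('b \<Rightarrow> 'b \<Rightarrow> bool) \<Rightarrow> 'b \<Rightarrow> 'b \<Rightarrow> 'b set" where
  "atoms_in L le a b = {x\<in>interval_in L le a b. covers_in L le a x}"

definition is_join_in :: "'b set \<Rightarrow> ('b \<Rightarrow> 'b \<Rightarrow> bool) \<Rightarrow> 'b set \<Rightarrow> 'b \<Rightarrow> bool" where
  "is_join_in K le A x \<longleftrightarrow> x \<in> K \<and> (\<forall>y\<in>A. le y x) \<and>
     (\<forall>z\<in>K. (\<forall>y\<in>A. le y z) \<longrightarrow> le x z)"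

definition atomistic_interval :: "'b set \<Rightarrow> ('b \<Rightarrow> 'b \<Rightarrow> bool) \<Rightarrow> 'b \<Rightarrow> 'b \<Rightarrow> bool" where
  "atomistic_interval L le a b \<longleftrightarrow> a \<in> L \<and> b \<in> L \<and> le a b \<and>
     (\<forall>x\<in>interval_in L le a b. \<exists>A\<subseteq>atoms_in L le a b.
         is_join_in (interval_in L le a b) le A x)"

definition maximal_atomistic_interval :: "'b set \<Rightarrow> ('b \<Rightarrow> 'b \<Rightarrow> bool) \<Rightarrow> 'b \<Rightarrow> 'b \<Rightarrow> bool" where
  "maximal_atomistic_interval L le a b \<longleftrightarrow> atomistic_interval L le a b \<and>
     (\<forall>c d. atomistic_interval L le c d \<and> interval_in L le a b \<subseteq> interval_in L le c d
        \<longrightarrow> interval_in L le c d = interval_in L le a b)"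

definition skeleton :: "'b set \<Rightarrow> ('b \<Rightarrow> 'b \<Rightarrow> bool) \<Rightarrow> 'b set" where
  "skeleton L le = {a. \<exists>b. maximal_atomistic_interval L le a b}"

end

theory Submission
  imports Defs
begin

text \<open>For \<open>s\<close> in a modular lattice of finite length let \<open>s\<^sup>*\<close> be the join of the upper covers of \<open>s\<close>
  and \<open>s\<^sub>*\<close> the meet of its lower covers; modularity gives \<open>s \<le> (s\<^sub>*)\<^sup>*\<close>. Take for \<open>M\<close> the
  union of the blocks \<open>[s\<^sub>*, s] \<times> [s, s\<^sup>*]\<close>. Membership of \<open>(x, y)\<close> in \<open>M\<close> is decided by the
  single block of \<open>y \<sqinter> x\<^sup>*\<close>, which makes \<open>M\<close> closed under joins and, dually, meets. Every block
  is atomistic, its atoms being \<open>(p, s)\<close> and \<open>(s\<^sub>*, q)\<close> for covers \<open>s\<^sub>* \<prec> p\<close> and \<open>s \<prec> q\<close>.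
  Conversely no cover in \<open>M\<close> moves both coordinates, and from this every atomistic interval
  of \<open>M\<close> with bottom \<open>(a, b)\<close> lies in the block of \<open>b \<sqinter> a\<^sup>*\<close>. So the maximal atomistic intervals
  are exactly the blocks, and \<open>s \<mapsto> (s\<^sub>*, s)\<close> maps the lattice isomorphically onto \<open>S(M)\<close>.\<close>

lemma covers_in_between: "covers_in L le p q \<Longrightarrow> z \<in> L \<Longrightarrow> le p z \<Longrightarrow> le z q \<Longrightarrow> z = p \<or> z = q"
  unfolding covers_in_def by blast

text \<open>Stated for explicit operations so that every result transfers to the dual lattice.\<close>

locale modular_finite_length = L: lattice inf le less sup
  for inf (infixl "\<sqinter>" 70) and le (infix "\<preceq>" 50) and less (infix "\<prec>" 50)
    and sup (infixl "\<squnion>" 65) +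
  assumes modular: "x \<preceq> z \<Longrightarrow> x \<squnion> (y \<sqinter> z) = (x \<squnion> y) \<sqinter> z"
  and finite_length: "\<exists>n. \<forall>C. Complete_Partial_Order.chain (\<preceq>) C \<longrightarrow> finite C \<and> card C \<le> n"
begin

lemma dual_modular_finite_length:
  "modular_finite_length (\<squnion>) (\<lambda>x y. y \<preceq> x) (\<lambda>x y. y \<prec> x) (\<sqinter>)"
proof (rule modular_finite_length.intro[OF L.dual_lattice], rule modular_finite_length_axioms.intro)
  fix x y z assume "z \<preceq> x"
  then have "z \<squnion> (y \<sqinter> x) = (z \<squnion> y) \<sqinter> x" by (rule modular)
  then show "x \<sqinter> (y \<squnion> z) = x \<sqinter> y \<squnion> z"
    by (simp add: L.inf_commute L.sup_commute)
next
  have "Complete_Partial_Order.chain (\<lambda>x y. y \<preceq> x) C = Complete_Partial_Order.chain (\<preceq>) C" for C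
    unfolding chain_def by blast
  then show "\<exists>n. \<forall>C. Complete_Partial_Order.chain (\<lambda>x y. y \<preceq> x) C \<longrightarrow> finite C \<and> card C \<le> n"
    using finite_length by presburger
qed

lemma wf_greater: "wf {(y, x). x \<prec> y}"
proof (rule ccontr)
  assume "\<not> ?thesis"
  then obtain f where f: "\<And>i. f i \<prec> f (Suc i)"
    unfolding wf_iff_no_infinite_down_chain by auto
  have less: "i < j \<Longrightarrow> f i \<prec> f j" for i j
    by (induction j) (auto intro: L.less_trans f simp: less_Suc_eq)
  have "inj f"
    by (rule injI) (metis less L.less_irrefl linorder_neqE_nat)
  then have "infinite (range f)"
    using finite_imageD infinite_UNIV_nat by blast
  moreover have "Complete_Partial_Order.chain (\<preceq>) (range f)"
  proof (rule chainI)
    fix a b assume "a \<in> range f" "b \<in> range f"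
    then obtain i j where "a = f i" "b = f j" by blast
    then show "a \<preceq> b \<or> b \<preceq> a"
      using less[of i j] less[of j i] by (cases i j rule: linorder_cases) auto
  qed
  ultimately show False
    using finite_length by blast
qed

lemma ex_maximal: "x \<in> V \<Longrightarrow> \<exists>m\<in>V. \<forall>v\<in>V. \<not> m \<prec> v"
  by (erule wfE_min[OF wf_greater]) blast

lemma ex_minimal: "x \<in> V \<Longrightarrow> \<exists>m\<in>V. \<forall>v\<in>V. \<not> v \<prec> m"
  by (rule modular_finite_length.ex_maximal[OF dual_modular_finite_length])

definition covered_by :: "'a \<Rightarrow> 'a \<Rightarrow> bool" where
  "covered_by x y \<longleftrightarrow> x \<prec> y \<and> \<not> (\<exists>z. x \<prec> z \<and> z \<prec> y)"

lemma covered_by_less: "covered_by x y \<Longrightarrow> x \<prec> y"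
  unfolding covered_by_def by simp

lemma covered_by_between: "covered_by x y \<Longrightarrow> x \<preceq> z \<Longrightarrow> z \<preceq> y \<Longrightarrow> z = x \<or> z = y"
  unfolding covered_by_def by (metis L.order.not_eq_order_implies_strict)

lemma ex_covered_by_le:
  assumes "x \<prec> y"
  shows "\<exists>p. covered_by x p \<and> p \<preceq> y"
proof -
  obtain p where p: "x \<prec> p" "p \<preceq> y" and min: "\<forall>z. x \<prec> z \<and> z \<preceq> y \<longrightarrow> \<not> z \<prec> p"
    using ex_minimal[of y "{z. x \<prec> z \<and> z \<preceq> y}"] assms by auto
  have "\<not> (x \<prec> z \<and> z \<prec> p)" for z
    using min p(2) by (meson L.less_imp_le L.order.trans)
  then have "covered_by x p"
    unfolding covered_by_def using p(1) by blast
  then show ?thesis using p by blast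
qed

lemma covered_by_sup:
  assumes c: "covered_by x p" and xz: "x \<preceq> z" and pz: "\<not> p \<preceq> z"
  shows "covered_by z (z \<squnion> p)"
  unfolding covered_by_def
proof safe
  show "z \<prec> z \<squnion> p"
    using pz by (metis L.order.not_eq_order_implies_strict L.sup.cobounded1 L.sup.cobounded2)
  fix w assume zw: "z \<prec> w" and wzp: "w \<prec> z \<squnion> p"
  have "w = z \<squnion> (p \<sqinter> w)"
    using modular[of z w p] zw wzp by (simp add: L.inf.absorb2 L.less_imp_le)
  moreover have "x \<preceq> p \<sqinter> w"
    using c xz zw covered_by_less by (meson L.le_infI L.less_imp_le L.order.trans)
  then have "p \<sqinter> w = x \<or> p \<sqinter> w = p"
    using covered_by_between[OF c] by simp
  ultimately show False
    using xz zw wzp by (metis L.inf.absorb_iff1 L.le_sup_iff L.leD L.less_irrefl L.sup.absorb1 L.sup_ge1)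
qed

definition sup_covers :: "'a \<Rightarrow> 'a" where
  "sup_covers x = (SOME m. (\<exists>ps. (\<forall>p\<in>set ps. covered_by x p) \<and> m = foldr (\<squnion>) ps x)
                          \<and> (\<forall>p. covered_by x p \<longrightarrow> p \<preceq> m))"

text \<open>The covers of \<open>x\<close> may form an infinite antichain, but by finite length some finite join of
  them is maximal, and then it bounds all of them.\<close>
lemma sup_covers_ex:
  "\<exists>m. (\<exists>ps. (\<forall>p\<in>set ps. covered_by x p) \<and> m = foldr (\<squnion>) ps x) \<and> (\<forall>p. covered_by x p \<longrightarrow> p \<preceq> m)"
proof -
  let ?V = "{m. \<exists>ps. (\<forall>p\<in>set ps. covered_by x p) \<and> m = foldr (\<squnion>) ps x}"
  have xV: "x \<in> ?V" by (rule CollectI, rule exI[of _ "[]"]) simp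
  obtain m where mV: "m \<in> ?V" and max: "\<forall>v\<in>?V. \<not> m \<prec> v"
    using ex_maximal[OF xV] by (elim bexE)
  obtain ps where ps: "\<forall>p\<in>set ps. covered_by x p" "m = foldr (\<squnion>) ps x"
    using mV by blast
  have "p \<preceq> m" if "covered_by x p" for p
  proof -
    have "p \<squnion> m \<in> ?V"
      using ps that by (intro CollectI exI[of _ "p # ps"]) simp
    then have "\<not> m \<prec> p \<squnion> m" using max by blast
    then show ?thesis
      by (metis L.order.not_eq_order_implies_strict L.sup.cobounded1 L.sup.cobounded2)
  qed
  then show ?thesis using ps by blast
qed

lemma sup_covers_foldr: "\<exists>ps. (\<forall>p\<in>set ps. covered_by x p) \<and> sup_covers x = foldr (\<squnion>) ps x"
  using someI_ex[OF sup_covers_ex] unfolding sup_covers_def by blast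

lemma covered_by_le_sup_covers: "covered_by x p \<Longrightarrow> p \<preceq> sup_covers x"
  using someI_ex[OF sup_covers_ex] unfolding sup_covers_def by blast

lemma le_foldr_sup: "x \<preceq> foldr (\<squnion>) ps x"
  by (induction ps) (auto intro: L.le_supI2)

lemma le_sup_covers: "x \<preceq> sup_covers x"
  using sup_covers_foldr le_foldr_sup by metis

lemma sup_covers_mono:
  assumes "x \<preceq> y"
  shows "sup_covers x \<preceq> sup_covers y"
proof -
  have "foldr (\<squnion>) ps x \<preceq> sup_covers y" if "\<forall>p\<in>set ps. covered_by x p" for ps
    using that
  proof (induction ps)
    case Nil
    then show ?case using assms le_sup_covers L.order.trans by simp
  next
    case (Cons p ps)
    have "p \<preceq> sup_covers y"
      using covered_by_sup[OF _ assms, of p] Cons.prems assms le_sup_covers[of y]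
        covered_by_le_sup_covers[of y "y \<squnion> p"]
      by (metis L.le_sup_iff L.order.trans list.set_intros(1))
    then show ?case using Cons by simp
  qed
  then show ?thesis using sup_covers_foldr by metis
qed

text \<open>Greedy: a cover of \<open>x\<close> is added to \<open>c\<close> whenever it is not yet below \<open>y \<squnion> c\<close>.\<close>
lemma ex_inf_complement:
  "\<forall>p\<in>set ps. covered_by x p \<Longrightarrow> x \<preceq> y \<Longrightarrow>
   \<exists>c. x \<preceq> c \<and> y \<sqinter> c = x \<and> foldr (\<squnion>) ps x \<preceq> y \<squnion> c"
proof (induction ps)
  case Nil
  then show ?case by (intro exI[of _ x]) (simp add: L.inf.absorb2)
next
  case (Cons p qs)
  then obtain c where c: "x \<preceq> c" "y \<sqinter> c = x" "foldr (\<squnion>) qs x \<preceq> y \<squnion> c" by auto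
  have cp: "covered_by x p" using Cons.prems by simp
  show ?case
  proof (cases "p \<preceq> y \<squnion> c")
    case True
    then show ?thesis using c by (intro exI[of _ c]) simp
  next
    case False
    have "x \<preceq> (y \<squnion> c) \<sqinter> p"
      using c(1) covered_by_less[OF cp] by (simp add: L.le_supI2 L.less_imp_le)
    then have ycp: "p \<sqinter> (y \<squnion> c) = x"
      using covered_by_between[OF cp] False by (metis L.inf.cobounded1 L.inf.cobounded2 L.inf_commute)
    have "(c \<squnion> p) \<sqinter> (y \<squnion> c) = c"
      using modular[of c "y \<squnion> c" p] ycp c(1) by (simp add: L.sup.absorb1)
    then have "y \<sqinter> (c \<squnion> p) = x"
      using c(2) by (metis L.inf.absorb1 L.inf_assoc L.inf_commute L.sup.cobounded1)
    moreover have "foldr (\<squnion>) (p # qs) x \<preceq> y \<squnion> (c \<squnion> p)"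
    proof -
      have "y \<squnion> c \<preceq> y \<squnion> (c \<squnion> p)" by (intro L.sup_mono) simp_all
      then show ?thesis using c(3) by (simp add: L.le_supI2 L.order.trans)
    qed
    ultimately show ?thesis
      using c(1) by (metis L.le_supI1)
  qed
qed

lemma le_by_covers:
  assumes xy: "x \<preceq> y" and yx: "y \<preceq> sup_covers x" and xz: "x \<preceq> z"
    and h: "\<And>p. covered_by x p \<Longrightarrow> p \<preceq> y \<Longrightarrow> p \<preceq> z"
  shows "y \<preceq> z"
proof -
  let ?w = "z \<sqinter> y"
  obtain ps where ps: "\<forall>p\<in>set ps. covered_by x p" "sup_covers x = foldr (\<squnion>) ps x"
    using sup_covers_foldr by blast
  obtain c where c: "x \<preceq> c" "?w \<sqinter> c = x" "sup_covers x \<preceq> ?w \<squnion> c"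
    using ex_inf_complement[OF ps(1), of ?w] ps(2) xy xz by auto
  have wy: "?w \<squnion> (c \<sqinter> y) = y"
    using modular[of ?w y c] yx c(3) by (simp add: L.inf.absorb2)
  show ?thesis
  proof (cases "c \<sqinter> y = x")
    case True
    then show ?thesis
      using wy xy xz by (metis L.inf.cobounded1 L.le_infI L.sup.absorb1)
  next
    case False
    then have "x \<prec> c \<sqinter> y"
      using c(1) xy by (simp add: L.order.not_eq_order_implies_strict)
    then obtain q where q: "covered_by x q" "q \<preceq> c \<sqinter> y" using ex_covered_by_le by blast
    then have "q \<preceq> ?w \<sqinter> c"
      using h[OF q(1)] by simp
    then show ?thesis
      using c(2) covered_by_less[OF q(1)] by (simp add: L.leD)
  qed
qed

lemma le_sup_covers_shift:
  assumes xa: "x \<preceq> a" and ay: "a \<preceq> y" and yx: "y \<preceq> sup_covers x"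
  shows "y \<preceq> sup_covers a"
proof -
  obtain ps where ps: "\<forall>p\<in>set ps. covered_by x p" "sup_covers x = foldr (\<squnion>) ps x"
    using sup_covers_foldr by blast
  obtain c where c: "x \<preceq> c" "a \<sqinter> c = x" "sup_covers x \<preceq> a \<squnion> c"
    using ex_inf_complement[OF ps(1) xa] ps(2) by auto
  have acy: "a \<squnion> (c \<sqinter> y) = y"
    using modular[OF ay, of c] yx c(3) by (simp add: L.inf.absorb2)
  have xy: "x \<preceq> y" using xa ay by (rule L.order.trans)
  have aic: "a \<sqinter> (c \<sqinter> y) = x"
    using c(2) xy by (metis L.inf.absorb1 L.inf_assoc)
  have "c \<sqinter> y \<preceq> sup_covers a"
  proof (rule le_by_covers)
    show "x \<preceq> c \<sqinter> y" using c(1) xy by simp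
    show "c \<sqinter> y \<preceq> sup_covers x" using yx by (meson L.inf.coboundedI2)
    show "x \<preceq> sup_covers a" using xa le_sup_covers by (rule L.order.trans)
    fix q assume q: "covered_by x q" "q \<preceq> c \<sqinter> y"
    show "q \<preceq> sup_covers a"
    proof (cases "q \<preceq> a")
      case True
      then have "q \<preceq> x" using q(2) aic by (metis L.le_inf_iff)
      then show ?thesis using covered_by_less[OF q(1)] by (simp add: L.leD)
    next
      case False
      then show ?thesis
        using covered_by_le_sup_covers[OF covered_by_sup[OF q(1) xa]] by simp
    qed
  qed
  then show ?thesis
    using acy le_sup_covers[of a] by (metis L.le_sup_iff)
qed


definition inf_cocovers :: "'a \<Rightarrow> 'a" where
  "inf_cocovers = modular_finite_length.sup_covers (\<lambda>x y. y \<preceq> x) (\<lambda>x y. y \<prec> x) (\<sqinter>)"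

lemma dual_covered_by: "modular_finite_length.covered_by (\<lambda>x y. y \<prec> x) x y = covered_by y x"
  unfolding modular_finite_length.covered_by_def[OF dual_modular_finite_length] covered_by_def
  by blast

lemma dual_inf_cocovers:
  "modular_finite_length.inf_cocovers (\<squnion>) (\<lambda>x y. y \<preceq> x) (\<lambda>x y. y \<prec> x) = sup_covers"
  unfolding modular_finite_length.inf_cocovers_def[OF dual_modular_finite_length] by simp

lemma inf_cocovers_le: "inf_cocovers x \<preceq> x"
  unfolding inf_cocovers_def
  using modular_finite_length.le_sup_covers[OF dual_modular_finite_length] .

lemma inf_cocovers_foldr: "\<exists>cs. (\<forall>c\<in>set cs. covered_by c x) \<and> inf_cocovers x = foldr (\<sqinter>) cs x"
  unfolding inf_cocovers_def
  using modular_finite_length.sup_covers_foldr[OF dual_modular_finite_length]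
  by (simp add: dual_covered_by)

lemma inf_cocovers_mono: "x \<preceq> y \<Longrightarrow> inf_cocovers x \<preceq> inf_cocovers y"
  unfolding inf_cocovers_def
  using modular_finite_length.sup_covers_mono[OF dual_modular_finite_length] by simp

lemma covered_by_inf: "covered_by c t \<Longrightarrow> z \<preceq> t \<Longrightarrow> \<not> z \<preceq> c \<Longrightarrow> covered_by (z \<sqinter> c) z"
  using modular_finite_length.covered_by_sup[OF dual_modular_finite_length, of t c z]
  by (simp add: dual_covered_by)

text \<open>Here \<open>p = m \<squnion> (p \<sqinter> c)\<close>, and both \<open>m\<close> and \<open>p \<sqinter> c\<close> cover \<open>m \<sqinter> c\<close>.\<close>
lemma covered_by_le_sup_covers_inf:
  assumes ct: "covered_by c t" and mc: "\<not> m \<preceq> c"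
    and mp: "covered_by m p" and pt: "p \<preceq> t"
  shows "p \<preceq> sup_covers (m \<sqinter> c)"
proof -
  have "m \<preceq> p" using covered_by_less[OF mp] by (rule L.less_imp_le)
  then have pc: "\<not> p \<preceq> c" using mc L.order.trans by blast
  have "p \<sqinter> c \<noteq> m" using mc by (metis L.inf.cobounded2)
  then have pcm: "\<not> p \<sqinter> c \<preceq> m"
    using covered_by_inf[OF ct pt pc] covered_by_less[OF mp] unfolding covered_by_def
    by (metis L.order.not_eq_order_implies_strict)
  have "covered_by (p \<sqinter> c \<sqinter> m) (p \<sqinter> c)"
    using covered_by_inf[OF mp _ pcm] by simp
  moreover have "p \<sqinter> c \<sqinter> m = m \<sqinter> c"
    using \<open>m \<preceq> p\<close> by (metis L.inf.absorb2 L.inf_assoc L.inf_commute L.inf_left_commute)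
  ultimately have "p \<sqinter> c \<preceq> sup_covers (m \<sqinter> c)"
    using covered_by_le_sup_covers by simp
  moreover have "m \<squnion> (p \<sqinter> c) = p"
    using covered_by_between[OF mp, of "m \<squnion> (p \<sqinter> c)"] \<open>m \<preceq> p\<close> pcm
    by (metis L.inf.cobounded1 L.le_supI L.sup.cobounded1 L.sup.cobounded2)
  moreover have "m \<preceq> sup_covers (m \<sqinter> c)"
    using covered_by_le_sup_covers[OF covered_by_inf[OF ct _ mc]] \<open>m \<preceq> p\<close> pt
    by (meson L.order.trans)
  ultimately show ?thesis by (metis L.le_supI)
qed

lemma le_sup_covers_inf_covered_by:
  assumes ct: "covered_by c t" and mt: "m \<preceq> t" and mc: "\<not> m \<preceq> c"
    and tm: "t \<preceq> sup_covers m"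
  shows "t \<preceq> sup_covers (m \<sqinter> c)"
proof (rule le_by_covers[OF mt tm])
  show "m \<preceq> sup_covers (m \<sqinter> c)"
    using covered_by_le_sup_covers[OF covered_by_inf[OF ct mt mc]] .
  show "covered_by m p \<Longrightarrow> p \<preceq> t \<Longrightarrow> p \<preceq> sup_covers (m \<sqinter> c)" for p
    using covered_by_le_sup_covers_inf[OF ct mc] .
qed

lemma le_sup_covers_inf_cocovers: "t \<preceq> sup_covers (inf_cocovers t)"
proof -
  have "t \<preceq> sup_covers (foldr (\<sqinter>) cs t)" if "\<forall>c\<in>set cs. covered_by c t" for cs
    using that
  proof (induction cs)
    case Nil
    then show ?case using le_sup_covers by simp
  next
    case (Cons c cs)
    let ?m = "foldr (\<sqinter>) cs t"
    have "?m \<preceq> t" by (induction cs) (auto intro: L.le_infI2)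
    then show ?case
      using Cons le_sup_covers_inf_covered_by[of c t ?m]
      by (cases "?m \<preceq> c") (simp_all add: L.inf.absorb2 L.inf_commute)
  qed
  then show ?thesis using inf_cocovers_foldr by metis
qed

lemma le_sup_covers_if_between: "inf_cocovers t \<preceq> a \<Longrightarrow> a \<preceq> t \<Longrightarrow> t \<preceq> sup_covers a"
  using le_sup_covers_shift le_sup_covers_inf_cocovers by blast

lemma inf_cocovers_le_if_between: "a \<preceq> s \<Longrightarrow> s \<preceq> sup_covers a \<Longrightarrow> inf_cocovers s \<preceq> a"
  using modular_finite_length.le_sup_covers_if_between[OF dual_modular_finite_length, of s a]
  unfolding dual_inf_cocovers inf_cocovers_def by simp


definition block :: "'a \<Rightarrow> ('a \<times> 'a) set" where
  "block s = {(x, y). inf_cocovers s \<preceq> x \<and> x \<preceq> s \<and> s \<preceq> y \<and> y \<preceq> sup_covers s}"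

definition blocks :: "('a \<times> 'a) set" where
  "blocks = (\<Union>s. block s)"

definition pair_le :: "'a \<times> 'a \<Rightarrow> 'a \<times> 'a \<Rightarrow> bool" where
  "pair_le p q \<longleftrightarrow> fst p \<preceq> fst q \<and> snd p \<preceq> snd q"

lemma mem_block_iff [simp]:
  "(x, y) \<in> block s \<longleftrightarrow> inf_cocovers s \<preceq> x \<and> x \<preceq> s \<and> s \<preceq> y \<and> y \<preceq> sup_covers s"
  unfolding block_def by simp

lemma block_subset_blocks: "block s \<subseteq> blocks"
  unfolding blocks_def by blast

lemma mem_blocks_iff: "(x, y) \<in> blocks \<longleftrightarrow> (\<exists>s. (x, y) \<in> block s)"
  unfolding blocks_def by blast

lemma bottom_mem_block: "(inf_cocovers s, s) \<in> block s"
  by (simp add: inf_cocovers_le le_sup_covers)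

lemma top_mem_block: "(s, sup_covers s) \<in> block s"
  by (simp add: inf_cocovers_le le_sup_covers)

lemma diag_mem_blocks: "(x, x) \<in> blocks"
  using block_subset_blocks[of x] by (auto simp: inf_cocovers_le le_sup_covers)

lemma blocks_le: "(x, y) \<in> blocks \<Longrightarrow> x \<preceq> y"
  unfolding mem_blocks_iff using L.order.trans by auto

text \<open>Membership in \<open>blocks\<close> is witnessed by the canonical choice \<open>s = y \<sqinter> sup_covers x\<close>.\<close>
lemma mem_blocks_iff_sup_covers:
  "(x, y) \<in> blocks \<longleftrightarrow> x \<preceq> y \<and> y \<preceq> sup_covers (y \<sqinter> sup_covers x)"
proof
  assume "(x, y) \<in> blocks"
  then obtain s where s: "inf_cocovers s \<preceq> x" "x \<preceq> s" "s \<preceq> y" "y \<preceq> sup_covers s"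
    unfolding mem_blocks_iff by auto
  have "s \<preceq> y \<sqinter> sup_covers x"
    using le_sup_covers_if_between[OF s(1,2)] s(3) by simp
  then have "sup_covers s \<preceq> sup_covers (y \<sqinter> sup_covers x)" by (rule sup_covers_mono)
  then show "x \<preceq> y \<and> y \<preceq> sup_covers (y \<sqinter> sup_covers x)"
    using s L.order.trans by blast
next
  assume h: "x \<preceq> y \<and> y \<preceq> sup_covers (y \<sqinter> sup_covers x)"
  let ?s = "y \<sqinter> sup_covers x"
  have xs: "x \<preceq> ?s" using h le_sup_covers[of x] by simp
  then have "(x, y) \<in> block ?s"
    using inf_cocovers_le_if_between[OF xs] h by simp
  then show "(x, y) \<in> blocks" using block_subset_blocks by blast
qed

lemma sup_mem_blocks:
  assumes "(x, y) \<in> blocks" "(u, v) \<in> blocks"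
  shows "(x \<squnion> u, y \<squnion> v) \<in> blocks"
proof -
  have a: "x \<preceq> y" "y \<preceq> sup_covers (y \<sqinter> sup_covers x)"
      "u \<preceq> v" "v \<preceq> sup_covers (v \<sqinter> sup_covers u)"
    using assms mem_blocks_iff_sup_covers by auto
  let ?T = "sup_covers ((y \<squnion> v) \<sqinter> sup_covers (x \<squnion> u))"
  have "sup_covers x \<preceq> sup_covers (x \<squnion> u)" by (rule sup_covers_mono) simp
  then have "y \<sqinter> sup_covers x \<preceq> (y \<squnion> v) \<sqinter> sup_covers (x \<squnion> u)"
    by (meson L.inf_mono L.sup.cobounded1)
  then have "y \<preceq> ?T" using a(2) sup_covers_mono L.order.trans by blast
  moreover have "sup_covers u \<preceq> sup_covers (x \<squnion> u)" by (rule sup_covers_mono) simp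
  then have "v \<sqinter> sup_covers u \<preceq> (y \<squnion> v) \<sqinter> sup_covers (x \<squnion> u)"
    by (meson L.inf_mono L.sup.cobounded2)
  then have "v \<preceq> ?T" using a(4) sup_covers_mono L.order.trans by blast
  moreover have "x \<squnion> u \<preceq> y \<squnion> v" using a by (meson L.sup_mono)
  ultimately show ?thesis unfolding mem_blocks_iff_sup_covers by simp
qed

lemma dual_blocks:
  "modular_finite_length.blocks (\<squnion>) (\<lambda>x y. y \<preceq> x) (\<lambda>x y. y \<prec> x) (\<sqinter>) = {(x, y). (y, x) \<in> blocks}"
proof -
  have "modular_finite_length.block (\<squnion>) (\<lambda>x y. y \<preceq> x) (\<lambda>x y. y \<prec> x) (\<sqinter>) s
      = {(x, y). (y, x) \<in> block s}" for s
    unfolding modular_finite_length.block_def[OF dual_modular_finite_length] dual_inf_cocovers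
    by (auto simp: inf_cocovers_def)
  then show ?thesis
    unfolding modular_finite_length.blocks_def[OF dual_modular_finite_length] blocks_def by blast
qed

lemma inf_mem_blocks: "(x, y) \<in> blocks \<Longrightarrow> (u, v) \<in> blocks \<Longrightarrow> (x \<sqinter> u, y \<sqinter> v) \<in> blocks"
  using modular_finite_length.sup_mem_blocks[OF dual_modular_finite_length, of y x v u]
  unfolding dual_blocks by simp

lemma sup_diag_mem_blocks: "(a, b) \<in> blocks \<Longrightarrow> a \<preceq> t \<Longrightarrow> (t, b \<squnion> t) \<in> blocks"
  using sup_mem_blocks[OF _ diag_mem_blocks, of a b t] by (simp add: L.sup.absorb2)

lemma interval_block: "interval_in blocks pair_le (inf_cocovers s, s) (s, sup_covers s) = block s"
  unfolding interval_in_def pair_le_def using block_subset_blocks by auto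


lemma covers_in_pair_fst:
  assumes "(a, b) \<in> L" "(p, b) \<in> L" "covered_by a p"
  shows "covers_in L pair_le (a, b) (p, b)"
  using assms covered_by_between[OF assms(3)] covered_by_less[OF assms(3)]
  unfolding covers_in_def pair_le_def by (auto intro: L.order.antisym simp: L.less_imp_le) blast+

lemma covers_in_pair_snd:
  assumes "(a, b) \<in> L" "(a, q) \<in> L" "covered_by b q"
  shows "covers_in L pair_le (a, b) (a, q)"
  using assms covered_by_between[OF assms(3)] covered_by_less[OF assms(3)]
  unfolding covers_in_def pair_le_def by (auto intro: L.order.antisym simp: L.less_imp_le) blast+

lemma covers_in_blocks_fst_or_snd:
  assumes cv: "covers_in blocks pair_le (a, b) (x, y)"
  shows "x = a \<or> y = b"
proof (rule ccontr)
  assume n: "\<not> (x = a \<or> y = b)"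
  have ab: "(a, b) \<in> blocks" and xy: "(x, y) \<in> blocks" and ax: "a \<preceq> x" and by': "b \<preceq> y"
    using cv unfolding covers_in_def pair_le_def by auto
  have between: "z = (a, b) \<or> z = (x, y)" if "z \<in> blocks" "pair_le (a, b) z" "pair_le z (x, y)" for z
    using covers_in_between[OF cv that] .
  have "y = b \<squnion> x"
    using between[OF sup_diag_mem_blocks[OF ab ax]] n ax by' blocks_le[OF xy]
    by (auto simp: pair_le_def)
  obtain x' where x': "covered_by a x'" "x' \<preceq> x"
    using ex_covered_by_le n ax L.order.not_eq_order_implies_strict by metis
  have ax': "a \<preceq> x'" using covered_by_less[OF x'(1)] by (rule L.less_imp_le)
  have "x' = x"
    using between[OF sup_diag_mem_blocks[OF ab ax']] x' ax' \<open>y = b \<squnion> x\<close> covered_by_less[OF x'(1)]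
    by (auto simp: pair_le_def L.le_supI2)
  then have "x \<preceq> sup_covers (y \<sqinter> sup_covers a)"
    using covered_by_le_sup_covers[OF x'(1)] blocks_le[OF xy] le_sup_covers L.order.trans
    by (metis L.le_inf_iff)
  moreover have "b \<preceq> sup_covers (b \<sqinter> sup_covers a)"
    using ab mem_blocks_iff_sup_covers by blast
  moreover have "sup_covers (b \<sqinter> sup_covers a) \<preceq> sup_covers (y \<sqinter> sup_covers a)"
    using by' by (intro sup_covers_mono L.inf_mono) simp_all
  moreover have "a \<preceq> y"
    using ax blocks_le[OF xy] by (rule L.order.trans)
  ultimately have "(a, y) \<in> blocks"
    unfolding mem_blocks_iff_sup_covers using \<open>y = b \<squnion> x\<close> by (simp add: L.order.trans)
  then show False
    using between[of "(a, y)"] n ax by' by (auto simp: pair_le_def)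
qed


lemma atom_fst_block:
  assumes "covered_by (inf_cocovers s) p" "p \<preceq> s"
  shows "(p, s) \<in> atoms_in blocks pair_le (inf_cocovers s, s) (s, sup_covers s)"
proof -
  have "(p, s) \<in> block s"
    using assms covered_by_less[OF assms(1)] by (simp add: L.less_imp_le le_sup_covers)
  then show ?thesis
    using covers_in_pair_fst[OF _ _ assms(1)] bottom_mem_block block_subset_blocks
    unfolding atoms_in_def interval_block by blast
qed

lemma atom_snd_block:
  assumes "covered_by s q"
  shows "(inf_cocovers s, q) \<in> atoms_in blocks pair_le (inf_cocovers s, s) (s, sup_covers s)"
proof -
  have "(inf_cocovers s, q) \<in> block s"
    using covered_by_less[OF assms] covered_by_le_sup_covers[OF assms]
    by (simp add: L.less_imp_le inf_cocovers_le)
  then show ?thesis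
    using covers_in_pair_snd[OF _ _ assms] bottom_mem_block block_subset_blocks
    unfolding atoms_in_def interval_block by blast
qed

lemma is_join_in_block_atoms:
  assumes z: "z \<in> block s"
  shows "is_join_in (block s) pair_le
           {q \<in> atoms_in blocks pair_le (inf_cocovers s, s) (s, sup_covers s). pair_le q z} z"
  unfolding is_join_in_def
proof (intro conjI ballI impI)
  show "z \<in> block s" by (fact z)
  show "pair_le q z" if "q \<in> {q \<in> atoms_in blocks pair_le (inf_cocovers s, s) (s, sup_covers s). pair_le q z}"
    for q using that by simp
  fix w assume w: "w \<in> block s"
    and ub: "\<forall>q\<in>{q \<in> atoms_in blocks pair_le (inf_cocovers s, s) (s, sup_covers s). pair_le q z}. pair_le q w"
  obtain x y where xy: "z = (x, y)" by (cases z)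
  obtain w1 w2 where w12: "w = (w1, w2)" by (cases w)
  have "x \<preceq> w1"
  proof (rule le_by_covers)
    show "inf_cocovers s \<preceq> x" "inf_cocovers s \<preceq> w1" using z w xy w12 by auto
    show "x \<preceq> sup_covers (inf_cocovers s)"
      using z xy le_sup_covers_inf_cocovers[of s] L.order.trans by auto
    fix p assume p: "covered_by (inf_cocovers s) p" "p \<preceq> x"
    have "x \<preceq> s" "s \<preceq> y" using z xy by auto
    then have "pair_le (p, s) z" unfolding xy pair_le_def using p(2) by simp
    then have "pair_le (p, s) w"
      using ub atom_fst_block[OF p(1) L.order.trans[OF p(2) \<open>x \<preceq> s\<close>]] by blast
    then show "p \<preceq> w1" unfolding w12 pair_le_def by simp
  qed
  moreover have "y \<preceq> w2"
  proof (rule le_by_covers)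
    show "s \<preceq> y" "y \<preceq> sup_covers s" "s \<preceq> w2" using z w xy w12 by auto
    fix q assume q: "covered_by s q" "q \<preceq> y"
    have "pair_le (inf_cocovers s, q) z" unfolding xy pair_le_def using q(2) z xy by simp
    then have "pair_le (inf_cocovers s, q) w" using ub atom_snd_block[OF q(1)] by blast
    then show "q \<preceq> w2" unfolding w12 pair_le_def by simp
  qed
  ultimately show "pair_le z w" unfolding xy w12 pair_le_def by simp
qed

lemma block_atomistic: "atomistic_interval blocks pair_le (inf_cocovers s, s) (s, sup_covers s)"
proof -
  have "pair_le (inf_cocovers s, s) (s, sup_covers s)"
    unfolding pair_le_def using inf_cocovers_le le_sup_covers by simp
  moreover have "\<forall>z\<in>block s. \<exists>A\<subseteq>atoms_in blocks pair_le (inf_cocovers s, s) (s, sup_covers s).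
      is_join_in (block s) pair_le A z"
  proof
    fix z assume "z \<in> block s"
    then show "\<exists>A\<subseteq>atoms_in blocks pair_le (inf_cocovers s, s) (s, sup_covers s).
        is_join_in (block s) pair_le A z"
      by (intro exI[of _ "{q \<in> atoms_in blocks pair_le (inf_cocovers s, s) (s, sup_covers s). pair_le q z}"]
          conjI is_join_in_block_atoms) auto
  qed
  ultimately show ?thesis
    unfolding atomistic_interval_def interval_block
    using bottom_mem_block top_mem_block block_subset_blocks by blast
qed


lemma covers_in_blocks_fst_le_sup_covers:
  assumes cv: "covers_in blocks pair_le (a, b) (x, b)"
  shows "x \<preceq> sup_covers a"
proof (cases "x = a")
  case True
  then show ?thesis using le_sup_covers by simp
next
  case False
  have ab: "(a, b) \<in> blocks" and xb: "(x, b) \<in> blocks" and ax: "a \<preceq> x"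
    using cv unfolding covers_in_def pair_le_def by auto
  obtain x' where x': "covered_by a x'" "x' \<preceq> x"
    using ex_covered_by_le False ax L.order.not_eq_order_implies_strict by metis
  have ax': "a \<preceq> x'" using covered_by_less[OF x'(1)] by (rule L.less_imp_le)
  have "x' \<preceq> b" using x'(2) blocks_le[OF xb] by (rule L.order.trans)
  then have "(x', b) \<in> blocks"
    using sup_diag_mem_blocks[OF ab ax'] by (simp add: L.sup.absorb1)
  then have "(x', b) = (a, b) \<or> (x', b) = (x, b)"
    using covers_in_between[OF cv \<open>(x', b) \<in> blocks\<close>] ax' x'(2) by (simp add: pair_le_def)
  then have "x' = x" using covered_by_less[OF x'(1)] by auto
  then show ?thesis using covered_by_le_sup_covers[OF x'(1)] by simp
qed

lemma covers_in_blocks_snd_le_sup_covers: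
  assumes cv: "covers_in blocks pair_le (a, b) (a, y)"
  shows "y \<preceq> sup_covers (b \<sqinter> sup_covers a)"
proof -
  let ?s = "b \<sqinter> sup_covers a" and ?t = "y \<sqinter> sup_covers a"
  have ab: "(a, b) \<in> blocks" and ay: "(a, y) \<in> blocks" and by': "b \<preceq> y"
    using cv unfolding covers_in_def pair_le_def by auto
  have a_le_b: "a \<preceq> b" using blocks_le[OF ab] .
  have y_le: "y \<preceq> sup_covers ?t" using ay mem_blocks_iff_sup_covers by blast
  show ?thesis
  proof (cases "?t \<preceq> b")
    case True
    then have "sup_covers ?t \<preceq> sup_covers ?s" by (intro sup_covers_mono) simp
    then show ?thesis using y_le by (rule L.order.trans[rotated])
  next
    case False
    have a_le_t: "a \<preceq> ?t" using blocks_le[OF ay] le_sup_covers[of a] by simp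
    have t_le: "?t \<preceq> sup_covers a" by simp
    have "(a, ?t) \<in> block ?t"
      using inf_cocovers_le_if_between[OF a_le_t t_le] a_le_t le_sup_covers by simp
    then have "(a, b \<squnion> ?t) \<in> blocks"
      using sup_mem_blocks[OF ab] block_subset_blocks by fastforce
    then have "(a, b \<squnion> ?t) = (a, b) \<or> (a, b \<squnion> ?t) = (a, y)"
      using covers_in_between[OF cv \<open>(a, b \<squnion> ?t) \<in> blocks\<close>] by' by (simp add: pair_le_def)
    moreover have "b \<squnion> ?t \<noteq> b" using False by (metis L.sup.cobounded2)
    ultimately have y: "y = b \<squnion> ?t" by auto
    have "a \<preceq> b \<sqinter> ?t" using a_le_b a_le_t by (rule L.le_infI)
    then have "?t \<preceq> sup_covers (b \<sqinter> ?t)"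
      using L.inf.cobounded2 t_le by (rule le_sup_covers_shift)
    also have "\<dots> \<preceq> sup_covers ?s" by (intro sup_covers_mono) (simp add: L.le_infI2)
    finally have "?t \<preceq> sup_covers ?s" .
    moreover have "b \<preceq> sup_covers ?s" using ab mem_blocks_iff_sup_covers by blast
    ultimately show ?thesis by (subst y) (rule L.le_supI)
  qed
qed

lemma covers_in_blocks_le_block_top:
  assumes cv: "covers_in blocks pair_le (a, b) (x, y)"
  shows "x \<preceq> b \<sqinter> sup_covers a \<and> y \<preceq> sup_covers (b \<sqinter> sup_covers a)"
proof -
  have ab: "(a, b) \<in> blocks" and xy: "(x, y) \<in> blocks"
    using cv unfolding covers_in_def by auto
  consider "y = b" | "x = a" using covers_in_blocks_fst_or_snd[OF cv] by blast
  then show ?thesis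
  proof cases
    case 1
    then show ?thesis
      using cv covers_in_blocks_fst_le_sup_covers blocks_le[OF xy] ab mem_blocks_iff_sup_covers
      by auto
  next
    case 2
    then show ?thesis
      using cv covers_in_blocks_snd_le_sup_covers blocks_le[OF ab] le_sup_covers by auto
  qed
qed

text \<open>The top of the interval is a join of atoms, and every atom lies below the top of that block.\<close>
lemma atomistic_interval_blocks_subset_block:
  assumes at: "atomistic_interval blocks pair_le (a, b) (c, d)"
  shows "interval_in blocks pair_le (a, b) (c, d) \<subseteq> block (b \<sqinter> sup_covers a)"
proof -
  let ?s = "b \<sqinter> sup_covers a"
  let ?I = "interval_in blocks pair_le (a, b) (c, d)"
  have ab: "(a, b) \<in> blocks" and cd: "(c, d) \<in> blocks" and ac: "a \<preceq> c" and bd: "b \<preceq> d"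
    using at unfolding atomistic_interval_def pair_le_def by auto
  have a_le_s: "a \<preceq> ?s" using blocks_le[OF ab] le_sup_covers[of a] by simp
  have b_le: "b \<preceq> sup_covers ?s" using ab mem_blocks_iff_sup_covers by blast
  have "(c, d) \<in> ?I" unfolding interval_in_def pair_le_def using cd ac bd by simp
  then obtain A where A: "A \<subseteq> atoms_in blocks pair_le (a, b) (c, d)" "is_join_in ?I pair_le A (c, d)"
    using at unfolding atomistic_interval_def by blast
  let ?w = "(c \<sqinter> ?s, d \<sqinter> sup_covers ?s)"
  have "(?s, sup_covers ?s) \<in> blocks" using top_mem_block block_subset_blocks by blast
  then have "?w \<in> ?I"
    using inf_mem_blocks[OF cd] ac a_le_s bd b_le unfolding interval_in_def pair_le_def by simp
  moreover have "pair_le q ?w" if "q \<in> A" for q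
  proof -
    obtain x y where q: "q = (x, y)" by (cases q)
    have "(x, y) \<in> atoms_in blocks pair_le (a, b) (c, d)" using that A(1) q by blast
    then have "covers_in blocks pair_le (a, b) (x, y)" "x \<preceq> c" "y \<preceq> d"
      unfolding atoms_in_def interval_in_def pair_le_def by simp_all
    then show ?thesis
      using covers_in_blocks_le_block_top[of a b x y] unfolding q pair_le_def by simp
  qed
  ultimately have "pair_le (c, d) ?w" using A(2) unfolding is_join_in_def by blast
  then have "c \<preceq> ?s" "d \<preceq> sup_covers ?s" unfolding pair_le_def by auto
  moreover have "inf_cocovers ?s \<preceq> a" by (rule inf_cocovers_le_if_between[OF a_le_s]) simp
  ultimately have bounds: "inf_cocovers ?s \<preceq> a" "c \<preceq> ?s" "?s \<preceq> b" "d \<preceq> sup_covers ?s"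
    by simp_all
  show ?thesis
  proof
    fix z assume "z \<in> ?I"
    then obtain u v where z: "z = (u, v)" "a \<preceq> u" "u \<preceq> c" "b \<preceq> v" "v \<preceq> d"
      unfolding interval_in_def pair_le_def by (cases z) auto
    then show "z \<in> block ?s"
      using bounds by (metis mem_block_iff L.order.trans)
  qed
qed


lemma block_subset_block_iff: "block s \<subseteq> block t \<longleftrightarrow> s = t"
proof
  assume "block s \<subseteq> block t"
  then have "(inf_cocovers s, s) \<in> block t" "(s, sup_covers s) \<in> block t"
    using bottom_mem_block top_mem_block by blast+
  then show "s = t" by (simp add: L.order.antisym)
qed simp

lemma maximal_atomistic_block:
  "maximal_atomistic_interval blocks pair_le (inf_cocovers s, s) (s, sup_covers s)"
  unfolding maximal_atomistic_interval_def
proof (intro conjI allI impI block_atomistic)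
  fix p q
  assume pq: "atomistic_interval blocks pair_le p q \<and>
    interval_in blocks pair_le (inf_cocovers s, s) (s, sup_covers s) \<subseteq> interval_in blocks pair_le p q"
  obtain a b c d where "p = (a, b)" "q = (c, d)" by (cases p, cases q)
  then have "interval_in blocks pair_le p q \<subseteq> block (b \<sqinter> sup_covers a)"
    using atomistic_interval_blocks_subset_block pq by blast
  moreover from this have "s = b \<sqinter> sup_covers a"
    using pq block_subset_block_iff unfolding interval_block by blast
  ultimately show "interval_in blocks pair_le p q = interval_in blocks pair_le (inf_cocovers s, s) (s, sup_covers s)"
    using pq unfolding interval_block by blast
qed

lemma maximal_atomistic_interval_blocks_bottom:
  assumes max: "maximal_atomistic_interval blocks pair_le p q"
  shows "p = (inf_cocovers (snd p), snd p)"
proof -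
  obtain a b c d where pq: "p = (a, b)" "q = (c, d)" by (cases p, cases q)
  let ?s = "b \<sqinter> sup_covers a"
  have at: "atomistic_interval blocks pair_le p q"
    and maximal: "\<And>c d. atomistic_interval blocks pair_le c d \<Longrightarrow>
      interval_in blocks pair_le p q \<subseteq> interval_in blocks pair_le c d \<Longrightarrow>
      interval_in blocks pair_le c d = interval_in blocks pair_le p q"
    using max unfolding maximal_atomistic_interval_def by blast+
  have "interval_in blocks pair_le p q \<subseteq> block ?s"
    using atomistic_interval_blocks_subset_block at pq by blast
  then have eq: "interval_in blocks pair_le p q = block ?s"
    using maximal[OF block_atomistic[of ?s]] unfolding interval_block by simp
  have "p \<in> interval_in blocks pair_le p q"
    using at unfolding atomistic_interval_def interval_in_def pair_le_def by auto
  then have "p \<in> block ?s" unfolding eq .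
  then have below: "inf_cocovers ?s \<preceq> a" "?s \<preceq> b"
    unfolding pq by simp_all
  have "(inf_cocovers ?s, ?s) \<in> interval_in blocks pair_le p q"
    unfolding eq by (rule bottom_mem_block)
  then have above: "a \<preceq> inf_cocovers ?s" "b \<preceq> ?s"
    unfolding interval_in_def pair_le_def pq by simp_all
  have "b = ?s" using above(2) below(2) by (rule L.order.antisym)
  moreover have "a = inf_cocovers ?s" using above(1) below(1) by (rule L.order.antisym)
  ultimately show ?thesis unfolding pq by simp
qed

lemma skeleton_blocks: "skeleton blocks pair_le = range (\<lambda>s. (inf_cocovers s, s))"
proof
  show "skeleton blocks pair_le \<subseteq> range (\<lambda>s. (inf_cocovers s, s))"
    unfolding skeleton_def using maximal_atomistic_interval_blocks_bottom by fastforce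
  show "range (\<lambda>s. (inf_cocovers s, s)) \<subseteq> skeleton blocks pair_le"
    unfolding skeleton_def using maximal_atomistic_block by blast
qed

end

theorem theorem7p3:
  assumes "modular_lattice TYPE('a::lattice)"
      and "finite_length TYPE('a)"
  shows "\<exists>M :: ('a \<times> 'a) set. sublattice_prod M \<and>
           (\<exists>f :: 'a \<Rightarrow> 'a \<times> 'a. bij_betw f UNIV (skeleton M prod_le) \<and>
              (\<forall>x y. x \<le> y \<longleftrightarrow> prod_le (f x) (f y)))"
proof -
  interpret modular_finite_length "inf :: 'a \<Rightarrow> 'a \<Rightarrow> 'a" "(\<le>)" "(<)" sup
    using assms unfolding modular_lattice_def finite_length_def
    by unfold_locales blast+
  have "pair_le = prod_le" by (intro ext) (simp add: pair_le_def prod_le_def)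
  let ?f = "\<lambda>s::'a. (inf_cocovers s, s)"
  have "sublattice_prod blocks"
    unfolding sublattice_prod_def using diag_mem_blocks inf_mem_blocks sup_mem_blocks by fastforce
  moreover have "bij_betw ?f UNIV (skeleton blocks prod_le)"
    unfolding \<open>pair_le = prod_le\<close>[symmetric] skeleton_blocks
    by (rule bij_betw_imageI) (auto simp: inj_on_def)
  moreover have "\<forall>x y. x \<le> y \<longleftrightarrow> prod_le (?f x) (?f y)"
    unfolding prod_le_def using inf_cocovers_mono by auto
  ultimately show ?thesis by blast
qed

end
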